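(* Let $\tau$ be a representation of a Lie group $\mathbf{G}\subseteq\mathrm{GL}(D)$ on $\mathbb{K}^N$ ($\mathbb{K}\in\{\mathbb{R},\mathbb{C}\}$) and let $\mathcal{D}_B=\sum_{j=1}^DB_j\partial/\partial x_j+mE$ be covariant with respect to $\tau$, with symbol $\sigma_{\mathcal{D}_B}(p_1,\dots,p_D)=i\sum_{j=1}^DB_jp_j$. (a) If $\mathbf{G}\subseteq\mathrm{O}(D)$, the form of $\sigma_{\mathcal{D}_B}$ does not change under the simultaneous coordinate transformations $x\mapsto gx$ in $\mathbb{R}^D$ and $y\mapsto\tau(g)y$ in $\mathbb{K}^N$; that is, $\sigma_{\mathcal{D}_B}(gp)=\tau(g)\,\sigma_{\mathcal{D}_B}(p)\,\tau(g)^{-1}$ for all $g\in\mathbf{G}$, $p\in\mathbb{R}^D$. (b) If $\mathbf{G}$ is $\mathrm{SO}(D)$ or $\mathrm{O}(D)$, then $\det\sigma_{\mathcal{D}_B}(p_1,\dots,p_D)=C\,(p_1^2+\dots+p_D^2)^n$ for some constant $C\in\mathbb{C}$ and $n\in\mathbb{N}$; moreover, if $N$ is odd then $C=0$ (so elliptic operators covariant with respect to a representation of $\mathrm{SO}(D)$ or $\mathrm{O}(D)$ can exist only if $N$ is even).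
   Context: $E$ is the $N\times N$ identity matrix, $m\in\mathbb{R}$, $B_j\in M_{N\times N}(\mathbb{K})$. Covariance of $\mathcal{D}_B$ with respect to $\tau$ means $\sum_{k=1}^D g_{jk}\,\tau(g)B_k\tau(g^{-1})=B_j$ for all $j$ and all $g\in\mathbf{G}$ ($g_{jk}$ the entries of $g$). *)

theory Defs
  imports "HOL-Analysis.Analysis"
begin

definition O_group :: "(real^'d^'d) set" where
  "O_group = {g. orthogonal_matrix g}"

definition SO_group :: "(real^'d^'d) set" where
  "SO_group = {g. rotation_matrix g}"

definition is_matrix_group :: "(real^'d^'d) set \<Rightarrow> bool" where
  "is_matrix_group G \<longleftrightarrow> mat 1 \<in> G \<and> (\<forall>g\<in>G. invertible g \<and> matrix_inv g \<in> G)
     \<and> (\<forall>g\<in>G. \<forall>h\<in>G. g ** h \<in> G)"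

definition is_representation ::
  "(real^'d^'d) set \<Rightarrow> (real^'d^'d \<Rightarrow> complex^'n^'n) \<Rightarrow> bool" where
  "is_representation G \<tau> \<longleftrightarrow> is_matrix_group G \<and> \<tau> (mat 1) = mat 1
     \<and> (\<forall>g\<in>G. \<forall>h\<in>G. \<tau> (g ** h) = \<tau> g ** \<tau> h) \<and> continuous_on G \<tau>"

text \<open>Covariance of D_B = sum_j B_j d/dx_j + m E with respect to tau:
  sum_k g_jk tau(g) B_k tau(g^{-1}) = B_j for all j and all g in G.\<close>
definition covariant ::
  "(real^'d^'d) set \<Rightarrow> (real^'d^'d \<Rightarrow> complex^'n^'n) \<Rightarrow> ('d \<Rightarrow> complex^'n^'n) \<Rightarrow> bool" where
  "covariant G \<tau> B \<longleftrightarrow> (\<forall>g\<in>G. \<forall>j.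
     (\<chi> a b. \<Sum>k\<in>UNIV. complex_of_real (g $ j $ k) * (\<tau> g ** B k ** \<tau> (matrix_inv g)) $ a $ b) = B j)"

definition symbol :: "('d \<Rightarrow> complex^'n^'n) \<Rightarrow> real^'d \<Rightarrow> complex^'n^'n" where
  "symbol B p = (\<chi> a b. \<i> * (\<Sum>j\<in>UNIV. complex_of_real (p $ j) * B j $ a $ b))"

end

theory Submission
  imports Defs
begin

text \<open>Covariance expresses each \<open>B\<^sub>j\<close> as \<open>\<Sum>\<^sub>k g\<^sub>j\<^sub>k \<tau>(g) B\<^sub>k \<tau>(g)\<^sup>-\<^sup>1\<close>. Substituting this
  into \<open>\<sigma>(gp) = i \<Sum>\<^sub>j (gp)\<^sub>j B\<^sub>j\<close>, the double sum collapses for orthogonal \<open>g\<close> because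
  \<open>g\<^sup>T g = 1\<close>, which gives (a). Hence \<open>det \<sigma>\<close> is invariant under \<open>G\<close>, and it is homogeneous of
  degree \<open>N\<close>. Since \<open>O(D)\<close>, and \<open>SO(D)\<close> for \<open>D \<ge> 2\<close>, act transitively on spheres,
  \<open>det \<sigma>(p) = |p|\<^sup>N det \<sigma>(e)\<close> for a fixed unit vector \<open>e\<close>. For odd \<open>N\<close> the
  point reflection \<open>p \<mapsto> -p\<close> then forces \<open>det \<sigma>(e) = -det \<sigma>(e)\<close>, i.e. \<open>det \<sigma> = 0\<close>.\<close>

lemma matrix_inv_mult:
  assumes "invertible A"
  shows "A ** matrix_inv A = mat 1" and "matrix_inv A ** A = mat 1"
  using someI_ex[OF assms[unfolded invertible_def]] unfolding matrix_inv_def by auto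

lemma matrix_inv_eq_right_inverse:
  fixes A A' :: "'a::field^'n^'n"
  assumes "A ** A' = mat 1"
  shows "matrix_inv A = A'"
proof -
  have "A' ** A = mat 1"
    using assms matrix_left_right_inverse by blast
  then have "invertible A"
    using assms invertible_def by blast
  have "matrix_inv A = matrix_inv A ** (A ** A')"
    using assms by simp
  also have "\<dots> = A'"
    by (simp add: matrix_mul_assoc matrix_inv_mult \<open>invertible A\<close>)
  finally show ?thesis .
qed

lemma matrix_mul_scaleR_left:
  fixes A :: "'a::real_algebra_1^'n^'m" and B :: "'a^'p^'n"
  shows "(c *\<^sub>R A) ** B = c *\<^sub>R (A ** B)"
  by (simp add: vec_eq_iff matrix_matrix_mult_def scaleR_sum_right)

lemma matrix_mul_scaleR_right:
  fixes A :: "'a::real_algebra_1^'n^'m" and B :: "'a^'p^'n"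
  shows "A ** (c *\<^sub>R B) = c *\<^sub>R (A ** B)"
  by (simp add: vec_eq_iff matrix_matrix_mult_def scaleR_sum_right)

lemma matrix_add_rdistrib: "(A + B) ** C = A ** C + B ** C"
  by (vector matrix_matrix_mult_def sum.distrib[symmetric] field_simps)

lemma matrix_mul_sum_scaleR:
  fixes X :: "'a::real_algebra_1^'n^'m" and Y :: "'k \<Rightarrow> 'a^'p^'n" and Z :: "'a^'q^'p"
  assumes "finite K"
  shows "X ** (\<Sum>k\<in>K. c k *\<^sub>R Y k) ** Z = (\<Sum>k\<in>K. c k *\<^sub>R (X ** Y k ** Z))"
  using assms
  by (induction K rule: finite_induct)
    (simp_all add: matrix_add_ldistrib matrix_add_rdistrib matrix_mul_scaleR_left matrix_mul_scaleR_right)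

lemma mat_matrix_mult_nth: "(mat c ** A) $ i $ j = c * A $ i $ j"
  by (simp add: matrix_matrix_mult_def mat_def if_distrib[of "\<lambda>x. x * _"] cong: if_cong)

lemma matrix_mat_mult_nth: "(A ** mat c) $ i $ j = A $ i $ j * (c::'a::comm_semiring_1)"
  by (simp add: matrix_matrix_mult_def mat_def if_distrib[of "\<lambda>x. _ * x"] cong: if_cong)

lemma mat_matrix_mult_commute:
  fixes A :: "'a::comm_semiring_1^'n^'m"
  shows "mat c ** A = A ** mat c"
  by (simp add: vec_eq_iff mat_matrix_mult_nth matrix_mat_mult_nth mult.commute)

lemma scaleR_eq_mat_mult:
  fixes A :: "'a::real_algebra_1^'n^'m"
  shows "c *\<^sub>R A = mat (of_real c) ** A"
  by (simp add: vec_eq_iff mat_matrix_mult_nth scaleR_conv_of_real[where 'a = 'a])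

lemma det_scaleR:
  fixes A :: "'a::{real_algebra_1,comm_ring_1}^'n^'n"
  shows "det (c *\<^sub>R A) = of_real c ^ CARD('n) * det A"
  by (simp add: scaleR_eq_mat_mult det_mul det_diagonal mat_def)

lemma orthogonal_matrix_sum_reindex:
  fixes g :: "real^'d^'d" and M :: "'d \<Rightarrow> 'v::real_vector"
  assumes "orthogonal_matrix g"
  shows "(\<Sum>j\<in>UNIV. (g *v p) $ j *\<^sub>R (\<Sum>k\<in>UNIV. g $ j $ k *\<^sub>R M k)) = (\<Sum>k\<in>UNIV. p $ k *\<^sub>R M k)"
proof -
  have "(g *v p) v* g = p"
    using assms
    by (simp add: orthogonal_matrix_def flip: transpose_matrix_vector)
      (simp add: matrix_vector_mul_assoc)
  then have coeff: "(\<Sum>j\<in>UNIV. (g *v p) $ j * g $ j $ k) = p $ k" for k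
    by (metis (no_types) vector_matrix_mult_def vec_lambda_beta)
  have "(\<Sum>j\<in>UNIV. (g *v p) $ j *\<^sub>R (\<Sum>k\<in>UNIV. g $ j $ k *\<^sub>R M k))
      = (\<Sum>j\<in>UNIV. \<Sum>k\<in>UNIV. ((g *v p) $ j * g $ j $ k) *\<^sub>R M k)"
    by (simp add: scaleR_sum_right)
  also have "\<dots> = (\<Sum>k\<in>UNIV. \<Sum>j\<in>UNIV. ((g *v p) $ j * g $ j $ k) *\<^sub>R M k)"
    by (rule sum.swap)
  also have "\<dots> = (\<Sum>k\<in>UNIV. p $ k *\<^sub>R M k)"
    by (simp add: coeff flip: scaleR_sum_left)
  finally show ?thesis .
qed

lemma O_group_transitive_on_spheres:
  fixes p q :: "real^'d"
  assumes "norm q = norm p"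
  obtains g where "g \<in> O_group" and "g *v q = p"
proof -
  obtain h where h: "orthogonal_transformation h" "h q = p"
    using orthogonal_transformation_exists[OF assms] by blast
  show thesis
  proof
    show "matrix h \<in> O_group"
      using h(1) by (simp add: O_group_def orthogonal_transformation_matrix)
    show "matrix h *v q = p"
      using h by (simp add: matrix_works orthogonal_transformation_linear)
  qed
qed

lemma SO_group_transitive_on_spheres:
  fixes p q :: "real^'d"
  assumes "2 \<le> CARD('d)" and "norm q = norm p"
  obtains g where "g \<in> SO_group" and "g *v q = p"
proof -
  obtain h where h: "orthogonal_transformation h" "det (matrix h) = 1" "h q = p"
    using rotation_exists[OF assms] by blast
  show thesis
  proof
    show "matrix h \<in> SO_group"
      using h(1,2) by (simp add: SO_group_def rotation_matrix_def orthogonal_transformation_matrix)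
    show "matrix h *v q = p"
      using h by (simp add: matrix_works orthogonal_transformation_linear)
  qed
qed

lemma norm_power2_vec: "norm x ^ 2 = (\<Sum>j\<in>UNIV. x $ j ^ 2)"
  for x :: "real^'d"
  by (simp add: norm_vec_def L2_set_def sum_nonneg)

lemma radial_homogeneous_eq:
  fixes f :: "'a::real_normed_vector \<Rightarrow> 'b::real_algebra_1"
  assumes hom: "\<And>c x. f (c *\<^sub>R x) = of_real c ^ k * f x"
    and radial: "\<And>x y. norm x = norm y \<Longrightarrow> f x = f y"
    and "norm e = 1"
  shows "f x = of_real (norm x) ^ k * f e"
proof -
  have "f x = f (norm x *\<^sub>R e)"
    using \<open>norm e = 1\<close> by (intro radial) simp
  then show ?thesis
    by (simp add: hom)
qed

lemma radial_homogeneous_odd_eq_0: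
  fixes f :: "'a::real_normed_vector \<Rightarrow> 'b::real_algebra_1"
  assumes hom: "\<And>c x. f (c *\<^sub>R x) = of_real c ^ k * f x"
    and radial: "\<And>x y. norm x = norm y \<Longrightarrow> f x = f y"
    and "odd k"
  shows "f x = 0"
proof -
  have "f x = f ((-1) *\<^sub>R x)"
    by (intro radial) simp
  also have "\<dots> = of_real (-1) ^ k * f x"
    by (rule hom)
  also have "\<dots> = - f x"
    using \<open>odd k\<close> by simp
  finally have "2 *\<^sub>R f x = 0"
    by (simp add: scaleR_2 eq_neg_iff_add_eq_0)
  then show ?thesis
    by simp
qed

lemma representation_mult_inverse:
  assumes "is_representation G \<tau>" and "g \<in> G"
  shows "\<tau> g ** \<tau> (matrix_inv g) = mat 1"
proof -
  have "invertible g" and "matrix_inv g \<in> G"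
    using assms unfolding is_representation_def is_matrix_group_def by auto
  have "\<tau> g ** \<tau> (matrix_inv g) = \<tau> (g ** matrix_inv g)"
    using assms \<open>matrix_inv g \<in> G\<close> by (simp add: is_representation_def)
  also have "\<dots> = mat 1"
    using assms(1) \<open>invertible g\<close> by (simp add: is_representation_def matrix_inv_mult)
  finally show ?thesis .
qed

lemma representation_matrix_inv:
  assumes "is_representation G \<tau>" and "g \<in> G"
  shows "matrix_inv (\<tau> g) = \<tau> (matrix_inv g)"
  using matrix_inv_eq_right_inverse representation_mult_inverse[OF assms] .

lemma covariant_iff_sum:
  "covariant G \<tau> B \<longleftrightarrow>
     (\<forall>g\<in>G. \<forall>j. (\<Sum>k\<in>UNIV. g $ j $ k *\<^sub>R (\<tau> g ** B k ** \<tau> (matrix_inv g))) = B j)"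
  by (simp add: covariant_def vec_eq_iff scaleR_conv_of_real[where 'a = complex])

lemma symbol_eq_sum: "symbol B p = mat \<i> ** (\<Sum>j\<in>UNIV. p $ j *\<^sub>R B j)"
  by (simp add: symbol_def vec_eq_iff mat_matrix_mult_nth scaleR_conv_of_real[where 'a = complex])

lemma covariant_sum_equivariant:
  assumes rep: "is_representation G \<tau>" and cov: "covariant G \<tau> B"
    and g: "g \<in> G" and orth: "orthogonal_matrix g"
  shows "(\<Sum>j\<in>UNIV. (g *v p) $ j *\<^sub>R B j) = \<tau> g ** (\<Sum>j\<in>UNIV. p $ j *\<^sub>R B j) ** matrix_inv (\<tau> g)"
proof -
  define M where "M k = \<tau> g ** B k ** \<tau> (matrix_inv g)" for k
  have "B j = (\<Sum>k\<in>UNIV. g $ j $ k *\<^sub>R M k)" for j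
    using cov g unfolding covariant_iff_sum M_def by simp
  then have "(\<Sum>j\<in>UNIV. (g *v p) $ j *\<^sub>R B j)
      = (\<Sum>j\<in>UNIV. (g *v p) $ j *\<^sub>R (\<Sum>k\<in>UNIV. g $ j $ k *\<^sub>R M k))"
    by simp
  also have "\<dots> = (\<Sum>k\<in>UNIV. p $ k *\<^sub>R M k)"
    using orth by (rule orthogonal_matrix_sum_reindex)
  also have "\<dots> = \<tau> g ** (\<Sum>k\<in>UNIV. p $ k *\<^sub>R B k) ** \<tau> (matrix_inv g)"
    unfolding M_def by (simp add: matrix_mul_sum_scaleR)
  finally show ?thesis
    using representation_matrix_inv[OF rep g] by simp
qed

lemma symbol_equivariant:
  assumes "is_representation G \<tau>" and "covariant G \<tau> B"
    and "g \<in> G" and "orthogonal_matrix g"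
  shows "symbol B (g *v p) = \<tau> g ** symbol B p ** matrix_inv (\<tau> g)"
  unfolding symbol_eq_sum covariant_sum_equivariant[OF assms]
  by (simp add: matrix_mul_assoc mat_matrix_mult_commute[of \<i> "\<tau> g"])

lemma det_symbol_invariant:
  assumes "is_representation G \<tau>" and "covariant G \<tau> B"
    and "g \<in> G" and "orthogonal_matrix g"
  shows "det (symbol B (g *v p)) = det (symbol B p)"
proof -
  have "det (\<tau> g) * det (matrix_inv (\<tau> g)) = 1"
    using representation_mult_inverse[OF assms(1,3)] representation_matrix_inv[OF assms(1,3)]
    by (metis det_I det_mul)
  then show ?thesis
    unfolding symbol_equivariant[OF assms] det_mul by (simp add: mult.commute)
qed

lemma symbol_scaleR: "symbol B (c *\<^sub>R p) = c *\<^sub>R symbol B p"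
  by (simp add: symbol_eq_sum scaleR_sum_right flip: matrix_mul_scaleR_right)

lemma det_symbol_scaleR: "det (symbol B (c *\<^sub>R p)) = of_real c ^ CARD('n) * det (symbol B p)"
  for B :: "'d::finite \<Rightarrow> complex^'n^'n"
  by (simp add: symbol_scaleR det_scaleR)

lemma det_symbol_radial:
  fixes G :: "(real^'d^'d) set"
  assumes rep: "is_representation G \<tau>" and cov: "covariant G \<tau> B"
    and G: "G = O_group \<or> (G = SO_group \<and> CARD('d) \<ge> 2)"
    and "norm x = norm y"
  shows "det (symbol B x) = det (symbol B y)"
proof -
  obtain g where "g \<in> G" and "g *v y = x"
    using G O_group_transitive_on_spheres SO_group_transitive_on_spheres \<open>norm x = norm y\<close>
    by metis
  moreover have "orthogonal_matrix g"
    using G \<open>g \<in> G\<close> by (auto simp: O_group_def SO_group_def rotation_matrix_def)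
  ultimately show ?thesis
    using det_symbol_invariant[OF rep cov] by blast
qed

theorem lemma2p7:
  fixes G :: "(real^'d^'d) set"
    and \<tau> :: "real^'d^'d \<Rightarrow> complex^'n^'n"
    and B :: "'d \<Rightarrow> complex^'n^'n"
  assumes rep: "is_representation G \<tau>"
    and cov: "covariant G \<tau> B"
  shows "(G \<subseteq> O_group \<longrightarrow>
           (\<forall>g\<in>G. \<forall>p. symbol B (g *v p) = \<tau> g ** symbol B p ** matrix_inv (\<tau> g)))
       \<and> ((G = O_group \<or> (G = SO_group \<and> CARD('d) \<ge> 2)) \<longrightarrow>
           (\<exists>(C::complex) (n::nat).
              (\<forall>p. det (symbol B p) = C * complex_of_real ((\<Sum>j\<in>UNIV. (p $ j)^2) ^ n))
            \<and> (odd CARD('n) \<longrightarrow> C = 0)))"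
proof (intro conjI impI)
  assume "G \<subseteq> O_group"
  then show "\<forall>g\<in>G. \<forall>p. symbol B (g *v p) = \<tau> g ** symbol B p ** matrix_inv (\<tau> g)"
    using symbol_equivariant[OF rep cov] by (auto simp: O_group_def)
next
  assume G: "G = O_group \<or> (G = SO_group \<and> CARD('d) \<ge> 2)"
  define f where "f p = det (symbol B p)" for p
  have hom: "f (c *\<^sub>R x) = of_real c ^ CARD('n) * f x" for c x
    by (simp add: f_def det_symbol_scaleR)
  have radial: "norm x = norm y \<Longrightarrow> f x = f y" for x y
    unfolding f_def by (rule det_symbol_radial[OF rep cov G])
  show "\<exists>(C::complex) (n::nat).
          (\<forall>p. det (symbol B p) = C * complex_of_real ((\<Sum>j\<in>UNIV. (p $ j)^2) ^ n))
        \<and> (odd CARD('n) \<longrightarrow> C = 0)"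
  proof (cases "even CARD('n)")
    case True
    then obtain n where n: "CARD('n) = 2 * n"
      by blast
    obtain k :: 'd where True
      by simp
    have "f p = f (axis k 1) * complex_of_real ((\<Sum>j\<in>UNIV. (p $ j)^2) ^ n)" for p
      using radial_homogeneous_eq[OF hom radial, of "axis k 1" p]
      by (simp add: n mult.commute flip: norm_power2_vec power_mult)
    then show ?thesis
      using True unfolding f_def by blast
  next
    case False
    then have "f p = 0 * complex_of_real ((\<Sum>j\<in>UNIV. (p $ j)^2) ^ 0)" for p
      using radial_homogeneous_odd_eq_0[OF hom radial] by simp
    then show ?thesis
      unfolding f_def by blast
  qed
qed

end
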